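(* There exists a constant $C$ (independent of $T$, $\nu$, $u$, $v$) such that for all $\nu>0$, $T>0$ and $u,v\in L^2([0,T];\chi^0)$, $$\|B(u,v)\|_{L^2([0,T];\chi^{0})}\leq \frac{C}{\nu^{1/2}}\|u\|_{L^2([0,T];\chi^{0})}\|v\|_{L^2([0,T];\chi^{0})}.$$
   Context: For $i\in\{-1,0,1\}$, $\chi^{i}=\{f\in\mathcal{S}'(\mathbb{R}^3;\mathbb{R}^3) : \|f\|_{\chi^i}:=\int_{\mathbb{R}^3}|\xi|^{i}|\hat f(\xi)|\,d\xi<\infty\}$. The bilinear operator $Q$ is $Q^j(u,v)=\sum_{k,l,m=1}^3 q^{j,m}_{k,l}\,\partial_m(u^kv^l)$, $j=1,2,3$, with $q^{j,m}_{k,l}(a)=\sum_{n,p=1}^3 a^{j,m,p,n}_{k,l}\,\mathcal{F}^{-1}\big(\tfrac{\xi_n\xi_p}{|\xi|^2}\hat a(\xi)\big)$ and $a^{j,m,p,n}_{k,l}$ fixed real numbers. $B(u,v)$ denotes the solution of the heat equation $\partial_t B(u,v)-\nu\Delta B(u,v)=Q(u,v)$, $B(u,v)|_{t=0}=0$, i.e. $B(u,v)(t)=\int_0^t e^{\nu(t-s)\Delta}Q(u,v)(s)\,ds$. *)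

theory Defs
  imports "HOL-Analysis.Analysis"
begin

text \<open>Everything is represented on the Fourier side.  A (time-dependent) vector field
  f(t) : R^3 -> R^3 is represented by its Fourier transform
  fh t xi = hat f(t)(xi) :: complex^3, with the convention
  hat f(xi) = int exp(-i x.xi) f(x) dx, so that hat(fg) = (2 pi)^(-3) (hat f * hat g).\<close>

definition chi0_norm :: "(real^3 \<Rightarrow> complex^3) \<Rightarrow> ennreal" where
  "chi0_norm fh = (\<integral>\<^sup>+ \<xi>. ennreal (norm (fh \<xi>)) \<partial>lborel)"

definition L2chi0_sq :: "real \<Rightarrow> (real \<Rightarrow> real^3 \<Rightarrow> complex^3) \<Rightarrow> ennreal" where
  "L2chi0_sq T fh = (\<integral>\<^sup>+ t. indicator {0..T} t * (chi0_norm (fh t))\<^sup>2 \<partial>lborel)"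

text \<open>The L^2([0,T]; chi^0) norm (meaningful when L2chi0_sq is finite).\<close>
definition L2chi0_norm :: "real \<Rightarrow> (real \<Rightarrow> real^3 \<Rightarrow> complex^3) \<Rightarrow> real" where
  "L2chi0_norm T fh = sqrt (enn2real (L2chi0_sq T fh))"

text \<open>Membership in L^2([0,T]; chi^0) of real (R^3-valued) fields, on the Fourier side:
  jointly measurable representative, finite norm, and Hermitian symmetry of the
  Fourier transform (real-valuedness) for a.e. t in [0,T].\<close>
definition in_L2chi0 :: "real \<Rightarrow> (real \<Rightarrow> real^3 \<Rightarrow> complex^3) \<Rightarrow> bool" where
  "in_L2chi0 T fh \<longleftrightarrow>
     (\<lambda>p. fh (fst p) (snd p)) \<in> borel_measurable (restrict_space borel ({0..T} \<times> UNIV))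
   \<and> L2chi0_sq T fh < \<infinity>
   \<and> (AE t in lborel. t \<in> {0..T} \<longrightarrow>
        (AE \<xi> in lborel. fh t (- \<xi>) = (\<chi> i. cnj (fh t \<xi> $ i))))"

definition conv3 :: "(real^3 \<Rightarrow> complex) \<Rightarrow> (real^3 \<Rightarrow> complex) \<Rightarrow> real^3 \<Rightarrow> complex" where
  "conv3 f g \<xi> = (\<integral>\<eta>. f (\<xi> - \<eta>) * g \<eta> \<partial>lborel)"

text \<open>Fourier transform of Q(u,v)(s):
  hat Q^j(xi) = sum_{k,l,m} sum_{n,p} a^{j,m,p,n}_{k,l} (xi_n xi_p/|xi|^2) (i xi_m) hat(u^k v^l)(xi),
  the coefficients a^{j,m,p,n}_{k,l} being given as  a j m p n k l.\<close>
definition Qhat :: "(3 \<Rightarrow> 3 \<Rightarrow> 3 \<Rightarrow> 3 \<Rightarrow> 3 \<Rightarrow> 3 \<Rightarrow> real)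
    \<Rightarrow> (real \<Rightarrow> real^3 \<Rightarrow> complex^3) \<Rightarrow> (real \<Rightarrow> real^3 \<Rightarrow> complex^3)
    \<Rightarrow> real \<Rightarrow> real^3 \<Rightarrow> complex^3" where
  "Qhat a uh vh s \<xi> = (\<chi> j. \<Sum>k\<in>UNIV. \<Sum>l\<in>UNIV. \<Sum>m\<in>UNIV. \<Sum>n\<in>UNIV. \<Sum>p\<in>UNIV.
      complex_of_real (a j m p n k l * (\<xi> $ n * \<xi> $ p / (norm \<xi>)\<^sup>2))
      * (\<i> * complex_of_real (\<xi> $ m))
      * (complex_of_real (1 / (2 * pi) ^ 3)
         * conv3 (\<lambda>\<eta>. uh s \<eta> $ k) (\<lambda>\<eta>. vh s \<eta> $ l) \<xi>))"

text \<open>Fourier transform of B(u,v)(t) = int_0^t e^{nu (t-s) Delta} Q(u,v)(s) ds.\<close>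
definition Bhat :: "(3 \<Rightarrow> 3 \<Rightarrow> 3 \<Rightarrow> 3 \<Rightarrow> 3 \<Rightarrow> 3 \<Rightarrow> real) \<Rightarrow> real
    \<Rightarrow> (real \<Rightarrow> real^3 \<Rightarrow> complex^3) \<Rightarrow> (real \<Rightarrow> real^3 \<Rightarrow> complex^3)
    \<Rightarrow> real \<Rightarrow> real^3 \<Rightarrow> complex^3" where
  "Bhat a \<nu> uh vh t \<xi> = (\<chi> j. (LINT s:{0..t}|lborel.
      complex_of_real (exp (- \<nu> * (t - s) * (norm \<xi>)\<^sup>2)) * Qhat a uh vh s \<xi> $ j))"

end

theory Submission
  imports Defs
begin

text \<open>On the Fourier side the multipliers \<open>\<xi>\<^sub>n \<xi>\<^sub>p / |\<xi>|^2\<close> are bounded by 1, so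
  \<open>|B(t,\<xi>)| \<le> K \<integral>\<^sub>0\<^sup>t k\<^sub>t(\<xi>,s) w(\<xi>,s) ds\<close> with the heat kernel
  \<open>k\<^sub>t(\<xi>,s) = exp(-\<nu>(t-s)|\<xi>|^2) |\<xi>|\<close> and the weight \<open>w(\<cdot>,s) = |u(s)| * |v(s)|\<close>, the convolution
  of the moduli of the Fourier transforms.  Integrating in \<open>\<xi>\<close> and applying Cauchy-Schwarz for the
  measure \<open>w d\<xi> ds\<close> gives \<open>\<parallel>B(t)\<parallel>^2 \<le> K^2 (\<integral> w k\<^sub>t^2) (\<integral> w)\<close>.  In time, the heat kernel satisfies
  \<open>\<integral>\<^sub>s\<^sup>\<infinity> k\<^sub>t(\<xi>,s)^2 dt = 1/(2\<nu>)\<close> uniformly in \<open>\<xi>\<close>, which is where \<open>\<nu>^(-1/2)\<close> comes from, while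
  \<open>\<integral> w = \<integral>\<^sub>0\<^sup>T \<parallel>u(s)\<parallel> \<parallel>v(s)\<parallel> ds \<le> \<parallel>u\<parallel> \<parallel>v\<parallel>\<close> by translation invariance and Cauchy-Schwarz in time.\<close>

lemma nn_integral_exp_decay:
  fixes a s :: real
  assumes "a > 0"
  shows "(\<integral>\<^sup>+t. ennreal (exp (- a * (t - s))) * indicator {s..} t \<partial>lborel) = ennreal (1 / a)"
proof -
  have "(\<integral>\<^sup>+t. ennreal (exp (- a * (t - s))) * indicator {s..} t \<partial>lborel)
      = (\<integral>\<^sup>+t. ennreal (exp (a * s)) * (ennreal (exp (- a * t)) * indicator {s..} t) \<partial>lborel)"
    by (intro nn_integral_cong) (simp add: ennreal_mult[symmetric] exp_add[symmetric] algebra_simps)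
  also have "\<dots> = ennreal (exp (a * s)) * (\<integral>\<^sup>+t. ennreal (exp (- a * t)) * indicator {s..} t \<partial>lborel)"
    by (rule nn_integral_cmult) simp
  also have "(\<integral>\<^sup>+t. ennreal (exp (- a * t)) * indicator {s..} t \<partial>lborel) = ennreal (exp (- a * s) / a)"
    by (rule nn_integral_has_integral_lebesgue')
      (use has_integral_exp_minus_to_infinity[OF assms, of s] in auto)
  also have "ennreal (exp (a * s)) * ennreal (exp (- a * s) / a) = ennreal (1 / a)"
    using assms by (simp add: ennreal_mult[symmetric] exp_minus field_simps)
  finally show ?thesis .
qed

lemma ennreal_norm_integral_le:
  "ennreal (norm (integral\<^sup>L M f)) \<le> (\<integral>\<^sup>+x. ennreal (norm (f x)) \<partial>M)"
  by (cases "integrable M f") (simp_all add: integral_norm_bound_ennreal not_integrable_integral_eq)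

lemma ennreal_norm_sum_le:
  fixes f :: "'i \<Rightarrow> 'b::real_normed_vector"
  shows "ennreal (norm (sum f A)) \<le> (\<Sum>i\<in>A. ennreal (norm (f i)))"
  using ennreal_leI[OF norm_sum[of f A]] by simp

lemma sqrt_enn2real_le_of_le_mult:
  assumes "X \<le> ennreal c * (A * B)" and "c \<ge> 0" and "A < \<infinity>" and "B < \<infinity>"
  shows "X < \<infinity>" and "sqrt (enn2real X) \<le> sqrt c * sqrt (enn2real A) * sqrt (enn2real B)"
proof -
  have finite: "ennreal c * (A * B) < \<infinity>"
    using assms(3,4) by (simp add: ennreal_mult_less_top)
  with assms(1) show "X < \<infinity>"
    by (rule le_less_trans)
  have "enn2real X \<le> enn2real (ennreal c * (A * B))"
    using assms(1) finite by (intro enn2real_mono) auto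
  also have "\<dots> = c * (enn2real A * enn2real B)"
    using assms(2) by (simp add: enn2real_mult)
  finally show "sqrt (enn2real X) \<le> sqrt c * sqrt (enn2real A) * sqrt (enn2real B)"
    by (simp add: real_sqrt_mult[symmetric] mult.assoc)
qed

lemma Cauchy_Schwarz_nn_integral_weighted:
  assumes [measurable]: "w \<in> borel_measurable M" "g \<in> borel_measurable M"
  shows "(\<integral>\<^sup>+x. g x * w x \<partial>M)\<^sup>2 \<le> (\<integral>\<^sup>+x. w x * (g x)\<^sup>2 \<partial>M) * (\<integral>\<^sup>+x. w x \<partial>M)"
proof -
  have "(\<integral>\<^sup>+x. g x * 1 \<partial>density M w)\<^sup>2 \<le> (\<integral>\<^sup>+x. (g x)\<^sup>2 \<partial>density M w) * (\<integral>\<^sup>+x. 1 ^ 2 \<partial>density M w)"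
    by (rule Cauchy_Schwarz_nn_integral) auto
  moreover have "(\<integral>\<^sup>+x. 1 ^ 2 \<partial>density M w) = (\<integral>\<^sup>+x. w x \<partial>M)"
    by (subst nn_integral_density) auto
  ultimately show ?thesis
    by (simp add: nn_integral_density mult.commute)
qed

lemma nn_integral_lborel_translate:
  fixes g :: "'a::euclidean_space \<Rightarrow> ennreal"
  assumes [measurable]: "g \<in> borel_measurable borel"
  shows "(\<integral>\<^sup>+x. g (x - c) \<partial>lborel) = (\<integral>\<^sup>+x. g x \<partial>lborel)"
proof -
  have "(\<integral>\<^sup>+x. g x \<partial>lborel) = (\<integral>\<^sup>+x. g x \<partial>distr lborel borel ((+) (- c)))"
    by (simp add: lborel_distr_plus)
  also have "\<dots> = (\<integral>\<^sup>+x. g (- c + x) \<partial>lborel)"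
    by (rule nn_integral_distr) auto
  finally show ?thesis by simp
qed

lemma abs_Riesz_symbol_le:
  fixes \<xi> :: "real^'n"
  shows "\<bar>\<xi> $ n * \<xi> $ p / (norm \<xi>)\<^sup>2\<bar> \<le> 1"
proof (cases "\<xi> = 0")
  case False
  have "\<bar>\<xi> $ n * \<xi> $ p\<bar> \<le> norm \<xi> * norm \<xi>"
    unfolding abs_mult by (intro mult_mono component_le_norm_cart) auto
  then show ?thesis using False by (simp add: abs_div power2_eq_square divide_le_eq_1)
qed simp

definition heat_kernel :: "real \<Rightarrow> real \<Rightarrow> 'a::euclidean_space \<times> real \<Rightarrow> real" where
  "heat_kernel \<nu> t p =
     (if 0 \<le> snd p \<and> snd p \<le> t then exp (- \<nu> * (t - snd p) * (norm (fst p))\<^sup>2) * norm (fst p) else 0)"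

lemma heat_kernel_measurable [measurable]:
  "heat_kernel \<nu> t \<in> borel_measurable (lborel \<Otimes>\<^sub>M lborel)"
  "(\<lambda>t. heat_kernel \<nu> t p) \<in> borel_measurable borel"
  "(\<lambda>x. heat_kernel \<nu> (fst x) (snd x)) \<in> borel_measurable (lborel \<Otimes>\<^sub>M (lborel \<Otimes>\<^sub>M lborel))"
  unfolding heat_kernel_def by (measurable, measurable, measurable)

lemma heat_kernel_measurable_lborel [measurable]:
  "heat_kernel \<nu> t \<in> borel_measurable (lborel :: ('a::euclidean_space \<times> real) measure)"
  "(\<lambda>x. heat_kernel \<nu> (fst x) (snd x)) \<in> borel_measurable (lborel \<Otimes>\<^sub>M (lborel :: ('a \<times> real) measure))"
  "(\<lambda>x. heat_kernel \<nu> (snd x) (fst x)) \<in> borel_measurable ((lborel :: ('a \<times> real) measure) \<Otimes>\<^sub>M lborel)"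
proof -
  show "heat_kernel \<nu> t \<in> borel_measurable (lborel :: ('a \<times> real) measure)"
    using heat_kernel_measurable(1) by (simp add: lborel_prod)
  show joint: "(\<lambda>x. heat_kernel \<nu> (fst x) (snd x)) \<in> borel_measurable (lborel \<Otimes>\<^sub>M (lborel :: ('a \<times> real) measure))"
    using heat_kernel_measurable(3) by (simp add: lborel_prod)
  from measurable_pair_swap[OF joint]
  show "(\<lambda>x. heat_kernel \<nu> (snd x) (fst x)) \<in> borel_measurable ((lborel :: ('a \<times> real) measure) \<Otimes>\<^sub>M lborel)"
    by (simp add: case_prod_beta')
qed

lemma nn_integral_heat_kernel_sq_le:
  assumes "\<nu> > 0"
  shows "(\<integral>\<^sup>+t. (ennreal (heat_kernel \<nu> t (\<xi>, s)))\<^sup>2 \<partial>lborel) \<le> ennreal (1 / (2 * \<nu>))"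
proof (cases "\<xi> = 0")
  case True
  then have "heat_kernel \<nu> t (\<xi>, s) = 0" for t
    by (simp add: heat_kernel_def)
  then show ?thesis by simp
next
  case False
  define a where "a = 2 * \<nu> * (norm \<xi>)\<^sup>2"
  have a: "a > 0" using False assms by (simp add: a_def)
  have "(\<integral>\<^sup>+t. (ennreal (heat_kernel \<nu> t (\<xi>, s)))\<^sup>2 \<partial>lborel)
      \<le> (\<integral>\<^sup>+t. ennreal ((norm \<xi>)\<^sup>2) * (ennreal (exp (- a * (t - s))) * indicator {s..} t) \<partial>lborel)"
  proof (intro nn_integral_mono)
    fix t
    have "(exp (- \<nu> * (t - s) * (norm \<xi>)\<^sup>2) * norm \<xi>)\<^sup>2 = (norm \<xi>)\<^sup>2 * exp (- a * (t - s))"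
      by (simp add: a_def power_mult_distrib exp_double[symmetric] power2_eq_square algebra_simps
          flip: exp_add)
    then show "(ennreal (heat_kernel \<nu> t (\<xi>, s)))\<^sup>2
        \<le> ennreal ((norm \<xi>)\<^sup>2) * (ennreal (exp (- a * (t - s))) * indicator {s..} t)"
      by (auto simp: heat_kernel_def indicator_def ennreal_power ennreal_mult[symmetric])
  qed
  also have "\<dots> = ennreal ((norm \<xi>)\<^sup>2) * ennreal (1 / a)"
    using nn_integral_exp_decay[OF a, of s] by (subst nn_integral_cmult) auto
  also have "\<dots> = ennreal (1 / (2 * \<nu>))"
    using False assms by (simp add: a_def ennreal_mult[symmetric])
  finally show ?thesis .
qed

definition modulus :: "real \<Rightarrow> (real \<Rightarrow> real^3 \<Rightarrow> complex^3) \<Rightarrow> real \<times> (real^3) \<Rightarrow> real" where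
  "modulus T uh p = (if fst p \<in> {0..T} then norm (uh (fst p) (snd p)) else 0)"

lemma modulus_measurable [measurable]:
  assumes "in_L2chi0 T uh"
  shows "modulus T uh \<in> borel_measurable (lborel \<Otimes>\<^sub>M lborel)"
proof -
  have "(\<lambda>p. uh (fst p) (snd p)) \<in> borel_measurable (restrict_space borel ({0..T} \<times> UNIV))"
    using assms by (simp add: in_L2chi0_def)
  moreover have closed: "({0..T} \<times> (UNIV :: (real^3) set)) \<inter> space borel \<in> sets borel"
    by (auto intro!: borel_closed closed_Times)
  ultimately have "(\<lambda>p. if p \<in> {0..T} \<times> UNIV then uh (fst p) (snd p) else 0) \<in> borel_measurable borel"
    using measurable_restrict_space_iff[OF closed, of 0 borel "\<lambda>p. uh (fst p) (snd p)"] by simp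
  then have "(\<lambda>p. norm (if p \<in> {0..T} \<times> UNIV then uh (fst p) (snd p) else 0)) \<in> borel_measurable borel"
    by measurable
  moreover have "(\<lambda>p. norm (if p \<in> {0..T} \<times> UNIV then uh (fst p) (snd p) else 0)) = modulus T uh"
    by (auto simp: modulus_def fun_eq_iff mem_Times_iff)
  ultimately show ?thesis by (simp add: lborel_prod)
qed

lemma nn_integral_modulus:
  "(\<integral>\<^sup>+\<xi>. ennreal (modulus T uh (s, \<xi>)) \<partial>lborel) = indicator {0..T} s * chi0_norm (uh s)"
proof (cases "s \<in> {0..T}")
  case False
  then have "modulus T uh (s, \<xi>) = 0" for \<xi>
    by (auto simp: modulus_def)
  then show ?thesis using False by simp
qed (simp add: modulus_def chi0_norm_def)

lemma nn_integral_modulus_sq: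
  "(\<integral>\<^sup>+s. (\<integral>\<^sup>+\<xi>. ennreal (modulus T uh (s, \<xi>)) \<partial>lborel)\<^sup>2 \<partial>lborel) = L2chi0_sq T uh"
  unfolding L2chi0_sq_def nn_integral_modulus
  by (intro nn_integral_cong) (simp add: power_mult_distrib indicator_def)

definition modulus_conv ::
    "real \<Rightarrow> (real \<Rightarrow> real^3 \<Rightarrow> complex^3) \<Rightarrow> (real \<Rightarrow> real^3 \<Rightarrow> complex^3) \<Rightarrow> (real^3) \<times> real \<Rightarrow> ennreal"
  where "modulus_conv T uh vh p =
    (\<integral>\<^sup>+\<eta>. ennreal (modulus T uh (snd p, fst p - \<eta>)) * ennreal (modulus T vh (snd p, \<eta>)) \<partial>lborel)"

lemma modulus_conv_measurable [measurable]:
  assumes [measurable]: "in_L2chi0 T uh" "in_L2chi0 T vh"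
  shows "modulus_conv T uh vh \<in> borel_measurable (lborel \<Otimes>\<^sub>M lborel)"
  unfolding modulus_conv_def by measurable

lemma ennreal_norm_conv3_le_modulus_conv:
  assumes "s \<in> {0..T}"
  shows "ennreal (norm (conv3 (\<lambda>\<eta>. uh s \<eta> $ k) (\<lambda>\<eta>. vh s \<eta> $ l) \<xi>)) \<le> modulus_conv T uh vh (\<xi>, s)"
proof -
  have "ennreal (norm (conv3 (\<lambda>\<eta>. uh s \<eta> $ k) (\<lambda>\<eta>. vh s \<eta> $ l) \<xi>))
     \<le> (\<integral>\<^sup>+\<eta>. ennreal (norm (uh s (\<xi> - \<eta>) $ k * vh s \<eta> $ l)) \<partial>lborel)"
    unfolding conv3_def by (rule ennreal_norm_integral_le)
  also have "\<dots> \<le> modulus_conv T uh vh (\<xi>, s)"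
    unfolding modulus_conv_def
  proof (intro nn_integral_mono)
    fix \<eta>
    have "norm (uh s (\<xi> - \<eta>) $ k * vh s \<eta> $ l) \<le> norm (uh s (\<xi> - \<eta>)) * norm (vh s \<eta>)"
      unfolding norm_mult by (intro mult_mono Finite_Cartesian_Product.norm_nth_le) auto
    then show "ennreal (norm (uh s (\<xi> - \<eta>) $ k * vh s \<eta> $ l))
        \<le> ennreal (modulus T uh (snd (\<xi>, s), fst (\<xi>, s) - \<eta>)) * ennreal (modulus T vh (snd (\<xi>, s), \<eta>))"
      using assms by (simp add: modulus_def ennreal_mult[symmetric] ennreal_leI)
  qed
  finally show ?thesis .
qed

lemma nn_integral_modulus_conv:
  assumes [measurable]: "in_L2chi0 T uh" "in_L2chi0 T vh"
  shows "(\<integral>\<^sup>+p. modulus_conv T uh vh p \<partial>lborel)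
    = (\<integral>\<^sup>+s. (\<integral>\<^sup>+\<xi>. ennreal (modulus T uh (s, \<xi>)) \<partial>lborel)
               * (\<integral>\<^sup>+\<xi>. ennreal (modulus T vh (s, \<xi>)) \<partial>lborel) \<partial>lborel)"
proof -
  have "(\<integral>\<^sup>+p. modulus_conv T uh vh p \<partial>lborel)
      = (\<integral>\<^sup>+s. \<integral>\<^sup>+\<xi>. modulus_conv T uh vh (\<xi>, s) \<partial>lborel \<partial>lborel)"
    unfolding lborel_prod[symmetric] by (rule lborel_pair.nn_integral_snd[symmetric]) measurable
  also have "\<dots> = (\<integral>\<^sup>+s. (\<integral>\<^sup>+\<xi>. ennreal (modulus T uh (s, \<xi>)) \<partial>lborel)
                          * (\<integral>\<^sup>+\<xi>. ennreal (modulus T vh (s, \<xi>)) \<partial>lborel) \<partial>lborel)"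
  proof (intro nn_integral_cong)
    fix s :: real
    have "(\<integral>\<^sup>+\<xi>. modulus_conv T uh vh (\<xi>, s) \<partial>lborel)
      = (\<integral>\<^sup>+\<eta>. \<integral>\<^sup>+\<xi>. ennreal (modulus T uh (s, \<xi> - \<eta>)) * ennreal (modulus T vh (s, \<eta>))
            \<partial>lborel \<partial>lborel)"
      unfolding modulus_conv_def prod.sel by (rule lborel_pair.Fubini'[symmetric]) measurable
    also have "\<dots> = (\<integral>\<^sup>+\<eta>. (\<integral>\<^sup>+\<xi>. ennreal (modulus T uh (s, \<xi> - \<eta>)) \<partial>lborel)
                            * ennreal (modulus T vh (s, \<eta>)) \<partial>lborel)"
      by (intro nn_integral_cong nn_integral_multc) measurable
    also have "\<dots> = (\<integral>\<^sup>+\<eta>. (\<integral>\<^sup>+\<xi>. ennreal (modulus T uh (s, \<xi>)) \<partial>lborel)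
                            * ennreal (modulus T vh (s, \<eta>)) \<partial>lborel)"
      using nn_integral_lborel_translate[where g="\<lambda>\<xi>. ennreal (modulus T uh (s, \<xi>))"] by simp
    also have "\<dots> = (\<integral>\<^sup>+\<xi>. ennreal (modulus T uh (s, \<xi>)) \<partial>lborel)
                    * (\<integral>\<^sup>+\<xi>. ennreal (modulus T vh (s, \<xi>)) \<partial>lborel)"
      by (rule nn_integral_cmult) measurable
    finally show "(\<integral>\<^sup>+\<xi>. modulus_conv T uh vh (\<xi>, s) \<partial>lborel) = \<dots>" .
  qed
  finally show ?thesis .
qed

lemma nn_integral_modulus_conv_sq_le:
  assumes [measurable]: "in_L2chi0 T uh" "in_L2chi0 T vh"
  shows "(\<integral>\<^sup>+p. modulus_conv T uh vh p \<partial>lborel)\<^sup>2 \<le> L2chi0_sq T uh * L2chi0_sq T vh"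
  unfolding nn_integral_modulus_conv[OF assms] nn_integral_modulus_sq[symmetric]
  by (rule Cauchy_Schwarz_nn_integral) measurable

definition symbol_bound :: "(3 \<Rightarrow> 3 \<Rightarrow> 3 \<Rightarrow> 3 \<Rightarrow> 3 \<Rightarrow> 3 \<Rightarrow> real) \<Rightarrow> 3 \<Rightarrow> real" where
  "symbol_bound a j =
     (\<Sum>k\<in>UNIV. \<Sum>l\<in>UNIV. \<Sum>m\<in>UNIV. \<Sum>n\<in>UNIV. \<Sum>p\<in>UNIV. \<bar>a j m p n k l\<bar>) / (2 * pi) ^ 3"

lemma symbol_bound_nonneg: "symbol_bound a j \<ge> 0"
  unfolding symbol_bound_def by (intro divide_nonneg_pos sum_nonneg) auto

lemma norm_Qhat_summand_le:
  fixes \<xi> :: "real^3"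
  shows "norm (complex_of_real (c * (\<xi> $ n * \<xi> $ p / (norm \<xi>)\<^sup>2))
      * (\<i> * complex_of_real (\<xi> $ m)) * (complex_of_real (1 / (2 * pi) ^ 3) * z))
    \<le> \<bar>c\<bar> / (2 * pi) ^ 3 * norm \<xi> * norm z"
proof -
  have "norm (complex_of_real (c * (\<xi> $ n * \<xi> $ p / (norm \<xi>)\<^sup>2))
      * (\<i> * complex_of_real (\<xi> $ m)) * (complex_of_real (1 / (2 * pi) ^ 3) * z))
     = \<bar>c\<bar> * \<bar>\<xi> $ n * \<xi> $ p / (norm \<xi>)\<^sup>2\<bar> * \<bar>\<xi> $ m\<bar> * (1 / (2 * pi) ^ 3) * norm z"
    unfolding norm_mult norm_of_real norm_ii by (simp add: abs_mult)
  also have "\<dots> \<le> \<bar>c\<bar> * 1 * norm \<xi> * (1 / (2 * pi) ^ 3) * norm z"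
    by (intro mult_right_mono mult_mono abs_Riesz_symbol_le component_le_norm_cart) auto
  finally show ?thesis by simp
qed

lemma ennreal_norm_Qhat_le:
  assumes "s \<in> {0..T}"
  shows "ennreal (norm (Qhat a uh vh s \<xi> $ j))
    \<le> ennreal (symbol_bound a j * norm \<xi>) * modulus_conv T uh vh (\<xi>, s)"
proof -
  let ?w = "modulus_conv T uh vh (\<xi>, s)"
  let ?z = "\<lambda>k l. conv3 (\<lambda>\<eta>. uh s \<eta> $ k) (\<lambda>\<eta>. vh s \<eta> $ l) \<xi>"
  let ?S = "\<lambda>k l m n p. complex_of_real (a j m p n k l * (\<xi> $ n * \<xi> $ p / (norm \<xi>)\<^sup>2))
      * (\<i> * complex_of_real (\<xi> $ m)) * (complex_of_real (1 / (2 * pi) ^ 3) * ?z k l)"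
  have "ennreal (norm (Qhat a uh vh s \<xi> $ j)) \<le>
     (\<Sum>k\<in>UNIV. \<Sum>l\<in>UNIV. \<Sum>m\<in>UNIV. \<Sum>n\<in>UNIV. \<Sum>p\<in>UNIV. ennreal (norm (?S k l m n p)))"
    unfolding Qhat_def vec_lambda_beta
    by (intro order_trans[OF ennreal_norm_sum_le] sum_mono ennreal_norm_sum_le)
  also have "\<dots> \<le> (\<Sum>k\<in>UNIV. \<Sum>l\<in>UNIV. \<Sum>m\<in>UNIV. \<Sum>n\<in>UNIV. \<Sum>p\<in>UNIV.
       ennreal (\<bar>a j m p n k l\<bar> / (2 * pi) ^ 3 * norm \<xi>) * ?w)"
  proof (intro sum_mono)
    fix k l m n p
    have "ennreal (norm (?S k l m n p)) \<le> ennreal (\<bar>a j m p n k l\<bar> / (2 * pi) ^ 3 * norm \<xi> * norm (?z k l))"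
      by (intro ennreal_leI norm_Qhat_summand_le)
    also have "\<dots> = ennreal (\<bar>a j m p n k l\<bar> / (2 * pi) ^ 3 * norm \<xi>) * ennreal (norm (?z k l))"
      by (rule ennreal_mult) auto
    also have "\<dots> \<le> ennreal (\<bar>a j m p n k l\<bar> / (2 * pi) ^ 3 * norm \<xi>) * ?w"
      by (intro mult_left_mono ennreal_norm_conv3_le_modulus_conv assms) simp
    finally show "ennreal (norm (?S k l m n p)) \<le> ennreal (\<bar>a j m p n k l\<bar> / (2 * pi) ^ 3 * norm \<xi>) * ?w" .
  qed
  also have "\<dots> = ennreal (symbol_bound a j * norm \<xi>) * ?w"
    by (simp only: sum_distrib_right[symmetric])
      (simp add: symbol_bound_def sum_nonneg sum_distrib_right sum_divide_distrib)
  finally show ?thesis .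
qed

lemma ennreal_norm_Bhat_component_le:
  assumes "t \<le> T" and [measurable]: "in_L2chi0 T uh" "in_L2chi0 T vh"
  shows "ennreal (norm (Bhat a \<nu> uh vh t \<xi> $ j)) \<le> ennreal (symbol_bound a j)
    * (\<integral>\<^sup>+s. ennreal (heat_kernel \<nu> t (\<xi>, s)) * modulus_conv T uh vh (\<xi>, s) \<partial>lborel)"
proof -
  let ?Q = "\<lambda>s. complex_of_real (exp (- \<nu> * (t - s) * (norm \<xi>)\<^sup>2)) * Qhat a uh vh s \<xi> $ j"
  let ?g = "\<lambda>s. ennreal (heat_kernel \<nu> t (\<xi>, s)) * modulus_conv T uh vh (\<xi>, s)"
  have "ennreal (norm (Bhat a \<nu> uh vh t \<xi> $ j)) \<le> (\<integral>\<^sup>+s. ennreal (norm (indicator {0..t} s *\<^sub>R ?Q s)) \<partial>lborel)"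
    unfolding Bhat_def vec_lambda_beta set_lebesgue_integral_def by (rule ennreal_norm_integral_le)
  also have "\<dots> \<le> (\<integral>\<^sup>+s. ennreal (symbol_bound a j) * ?g s \<partial>lborel)"
  proof (intro nn_integral_mono)
    fix s
    show "ennreal (norm (indicator {0..t} s *\<^sub>R ?Q s)) \<le> ennreal (symbol_bound a j) * ?g s"
    proof (cases "s \<in> {0..t}")
      case True
      have "ennreal (norm (indicator {0..t} s *\<^sub>R ?Q s))
          = ennreal (exp (- \<nu> * (t - s) * (norm \<xi>)\<^sup>2)) * ennreal (norm (Qhat a uh vh s \<xi> $ j))"
        using True by (simp add: norm_mult ennreal_mult)
      also have "\<dots> \<le> ennreal (exp (- \<nu> * (t - s) * (norm \<xi>)\<^sup>2))
          * (ennreal (symbol_bound a j * norm \<xi>) * modulus_conv T uh vh (\<xi>, s))"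
        using True \<open>t \<le> T\<close> by (intro mult_left_mono ennreal_norm_Qhat_le) auto
      also have "\<dots> = ennreal (symbol_bound a j) * ?g s"
        using True symbol_bound_nonneg[of a j] by (simp add: heat_kernel_def ennreal_mult mult_ac)
      finally show ?thesis .
    qed (simp add: heat_kernel_def)
  qed
  also have "\<dots> = ennreal (symbol_bound a j) * (\<integral>\<^sup>+s. ?g s \<partial>lborel)"
    by (rule nn_integral_cmult) measurable
  finally show ?thesis .
qed

lemma ennreal_norm_Bhat_le:
  assumes "t \<le> T" and "in_L2chi0 T uh" "in_L2chi0 T vh"
  shows "ennreal (norm (Bhat a \<nu> uh vh t \<xi>)) \<le> ennreal (\<Sum>j\<in>UNIV. symbol_bound a j)
    * (\<integral>\<^sup>+s. ennreal (heat_kernel \<nu> t (\<xi>, s)) * modulus_conv T uh vh (\<xi>, s) \<partial>lborel)"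
proof -
  let ?I = "\<integral>\<^sup>+s. ennreal (heat_kernel \<nu> t (\<xi>, s)) * modulus_conv T uh vh (\<xi>, s) \<partial>lborel"
  have "ennreal (norm (Bhat a \<nu> uh vh t \<xi>)) \<le> ennreal (\<Sum>j\<in>UNIV. norm (Bhat a \<nu> uh vh t \<xi> $ j))"
    unfolding norm_vec_def by (intro ennreal_leI L2_set_le_sum) simp
  also have "\<dots> = (\<Sum>j\<in>UNIV. ennreal (norm (Bhat a \<nu> uh vh t \<xi> $ j)))"
    by simp
  also have "\<dots> \<le> (\<Sum>j\<in>UNIV. ennreal (symbol_bound a j) * ?I)"
    by (intro sum_mono ennreal_norm_Bhat_component_le assms)
  also have "\<dots> = ennreal (\<Sum>j\<in>UNIV. symbol_bound a j) * ?I"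
    by (simp only: sum_distrib_right[symmetric]) (simp add: symbol_bound_nonneg)
  finally show ?thesis .
qed

lemma chi0_norm_Bhat_le:
  assumes "t \<le> T" and [measurable]: "in_L2chi0 T uh" "in_L2chi0 T vh"
  shows "chi0_norm (Bhat a \<nu> uh vh t) \<le> ennreal (\<Sum>j\<in>UNIV. symbol_bound a j)
    * (\<integral>\<^sup>+p. ennreal (heat_kernel \<nu> t p) * modulus_conv T uh vh p \<partial>lborel)"
proof -
  have "chi0_norm (Bhat a \<nu> uh vh t) \<le> (\<integral>\<^sup>+\<xi>. ennreal (\<Sum>j\<in>UNIV. symbol_bound a j)
      * (\<integral>\<^sup>+s. ennreal (heat_kernel \<nu> t (\<xi>, s)) * modulus_conv T uh vh (\<xi>, s) \<partial>lborel) \<partial>lborel)"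
    unfolding chi0_norm_def by (intro nn_integral_mono ennreal_norm_Bhat_le assms)
  also have "\<dots> = ennreal (\<Sum>j\<in>UNIV. symbol_bound a j)
      * (\<integral>\<^sup>+\<xi>. \<integral>\<^sup>+s. ennreal (heat_kernel \<nu> t (\<xi>, s)) * modulus_conv T uh vh (\<xi>, s) \<partial>lborel \<partial>lborel)"
    by (rule nn_integral_cmult) measurable
  also have "(\<integral>\<^sup>+\<xi>. \<integral>\<^sup>+s. ennreal (heat_kernel \<nu> t (\<xi>, s)) * modulus_conv T uh vh (\<xi>, s) \<partial>lborel \<partial>lborel)
      = (\<integral>\<^sup>+p. ennreal (heat_kernel \<nu> t p) * modulus_conv T uh vh p \<partial>lborel)"
    unfolding lborel_prod[symmetric]
    by (rule lborel.nn_integral_fst[where f="\<lambda>p. ennreal (heat_kernel \<nu> t p) * modulus_conv T uh vh p"])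
      measurable
  finally show ?thesis .
qed

lemma L2chi0_sq_Bhat_le:
  assumes "\<nu> > 0" and uv [measurable]: "in_L2chi0 T uh" "in_L2chi0 T vh"
  shows "L2chi0_sq T (Bhat a \<nu> uh vh)
    \<le> ennreal ((\<Sum>j\<in>UNIV. symbol_bound a j)\<^sup>2 / (2 * \<nu>)) * (\<integral>\<^sup>+p. modulus_conv T uh vh p \<partial>lborel)\<^sup>2"
proof -
  define K where "K = (\<Sum>j\<in>UNIV. symbol_bound a j)"
  define w where "w = modulus_conv T uh vh"
  define W where "W = (\<integral>\<^sup>+p. w p \<partial>lborel)"
  have K: "K \<ge> 0"
    unfolding K_def by (intro sum_nonneg symbol_bound_nonneg)
  have [measurable]: "w \<in> borel_measurable lborel"
    using modulus_conv_measurable[OF uv] by (simp add: w_def lborel_prod)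
  have "indicator {0..T} t * (chi0_norm (Bhat a \<nu> uh vh t))\<^sup>2
      \<le> ennreal (K\<^sup>2) * W * (\<integral>\<^sup>+p. w p * (ennreal (heat_kernel \<nu> t p))\<^sup>2 \<partial>lborel)" for t
  proof (cases "t \<in> {0..T}")
    case True
    have "(chi0_norm (Bhat a \<nu> uh vh t))\<^sup>2 \<le> (ennreal K * (\<integral>\<^sup>+p. ennreal (heat_kernel \<nu> t p) * w p \<partial>lborel))\<^sup>2"
      using True unfolding K_def w_def by (intro power_mono chi0_norm_Bhat_le uv) auto
    also have "\<dots> = ennreal (K\<^sup>2) * (\<integral>\<^sup>+p. ennreal (heat_kernel \<nu> t p) * w p \<partial>lborel)\<^sup>2"
      using K by (simp add: power_mult_distrib ennreal_power)
    also have "\<dots> \<le> ennreal (K\<^sup>2) * ((\<integral>\<^sup>+p. w p * (ennreal (heat_kernel \<nu> t p))\<^sup>2 \<partial>lborel) * W)"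
      unfolding W_def by (intro mult_left_mono Cauchy_Schwarz_nn_integral_weighted) measurable
    finally show ?thesis using True by (simp add: mult_ac)
  qed simp
  then have "L2chi0_sq T (Bhat a \<nu> uh vh)
      \<le> (\<integral>\<^sup>+t. ennreal (K\<^sup>2) * W * (\<integral>\<^sup>+p. w p * (ennreal (heat_kernel \<nu> t p))\<^sup>2 \<partial>lborel) \<partial>lborel)"
    unfolding L2chi0_sq_def by (intro nn_integral_mono)
  also have "\<dots> = ennreal (K\<^sup>2) * W * (\<integral>\<^sup>+t. \<integral>\<^sup>+p. w p * (ennreal (heat_kernel \<nu> t p))\<^sup>2 \<partial>lborel \<partial>lborel)"
    by (rule nn_integral_cmult) measurable
  also have "(\<integral>\<^sup>+t. \<integral>\<^sup>+p. w p * (ennreal (heat_kernel \<nu> t p))\<^sup>2 \<partial>lborel \<partial>lborel)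
      = (\<integral>\<^sup>+p. \<integral>\<^sup>+t. w p * (ennreal (heat_kernel \<nu> t p))\<^sup>2 \<partial>lborel \<partial>lborel)"
    by (rule lborel_pair.Fubini') measurable
  also have "\<dots> = (\<integral>\<^sup>+p. w p * (\<integral>\<^sup>+t. (ennreal (heat_kernel \<nu> t p))\<^sup>2 \<partial>lborel) \<partial>lborel)"
    by (intro nn_integral_cong nn_integral_cmult) measurable
  also have "\<dots> \<le> (\<integral>\<^sup>+p. w p * ennreal (1 / (2 * \<nu>)) \<partial>lborel)"
    using nn_integral_heat_kernel_sq_le[OF \<open>\<nu> > 0\<close>]
    by (intro nn_integral_mono mult_left_mono) (auto simp: split_paired_all)
  also have "\<dots> = W * ennreal (1 / (2 * \<nu>))"
    unfolding W_def by (rule nn_integral_multc) measurable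
  also have "ennreal (K\<^sup>2) * W * (W * ennreal (1 / (2 * \<nu>))) = ennreal (K\<^sup>2 / (2 * \<nu>)) * W\<^sup>2"
    using \<open>\<nu> > 0\<close> by (simp add: ennreal_mult[symmetric] power2_eq_square mult_ac)
  finally show ?thesis
    by (simp add: K_def W_def w_def mult_left_mono)
qed

theorem proposition2p2:
  fixes a :: "3 \<Rightarrow> 3 \<Rightarrow> 3 \<Rightarrow> 3 \<Rightarrow> 3 \<Rightarrow> 3 \<Rightarrow> real"
  shows "\<exists>C::real. \<forall>\<nu> T uh vh. \<nu> > 0 \<longrightarrow> T > 0 \<longrightarrow> in_L2chi0 T uh \<longrightarrow> in_L2chi0 T vh \<longrightarrow>
           L2chi0_sq T (Bhat a \<nu> uh vh) < \<infinity> \<and>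
           L2chi0_norm T (Bhat a \<nu> uh vh)
             \<le> C / sqrt \<nu> * L2chi0_norm T uh * L2chi0_norm T vh"
proof (intro exI allI impI)
  fix \<nu> T :: real and uh vh
  assume "\<nu> > 0" "T > 0" and uv: "in_L2chi0 T uh" "in_L2chi0 T vh"
  let ?K = "\<Sum>j\<in>UNIV. symbol_bound a j"
  have "L2chi0_sq T (Bhat a \<nu> uh vh)
      \<le> ennreal (?K\<^sup>2 / (2 * \<nu>)) * (\<integral>\<^sup>+p. modulus_conv T uh vh p \<partial>lborel)\<^sup>2"
    by (rule L2chi0_sq_Bhat_le[OF \<open>\<nu> > 0\<close> uv])
  also have "\<dots> \<le> ennreal (?K\<^sup>2 / (2 * \<nu>)) * (L2chi0_sq T uh * L2chi0_sq T vh)"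
    by (intro mult_left_mono nn_integral_modulus_conv_sq_le uv) simp
  finally have bound: "L2chi0_sq T (Bhat a \<nu> uh vh) \<le> \<dots>" .
  have finite: "L2chi0_sq T uh < \<infinity>" "L2chi0_sq T vh < \<infinity>"
    using uv by (simp_all add: in_L2chi0_def)
  have "sqrt (?K\<^sup>2 / (2 * \<nu>)) = ?K / sqrt 2 / sqrt \<nu>"
    using \<open>\<nu> > 0\<close> by (simp add: real_sqrt_divide real_sqrt_mult sum_nonneg symbol_bound_nonneg)
  with sqrt_enn2real_le_of_le_mult[OF bound _ finite] \<open>\<nu> > 0\<close>
  show "L2chi0_sq T (Bhat a \<nu> uh vh) < \<infinity> \<and>
      L2chi0_norm T (Bhat a \<nu> uh vh) \<le> ?K / sqrt 2 / sqrt \<nu> * L2chi0_norm T uh * L2chi0_norm T vh"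
    by (simp add: L2chi0_norm_def)
qed

end
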